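(* For every $n\ge2$, the first discriminant-resultant vanishes identically: $DR_{n,1}(f,g)=0$ as a polynomial in the coefficients of a binary form $f$ of degree $n$ and a binary form $g$ of degree $n-2$.
   Context: Let $k$ be a field of characteristic zero. For pairs $\sigma=(\sigma_0,\sigma_1)$, $\tau=(\tau_0,\tau_1)$, the bracket is $[\sigma,\tau]:=\sigma_0\tau_1-\tau_0\sigma_1$. Resultant convention: if $f=\prod_{i=1}^d(\gamma_{i,0}x-\gamma_{i,1}y)$ and $g=\prod_{j=1}^e(\delta_{j,0}x-\delta_{j,1}y)$, then $\mathrm{res}(f,g)=\prod_{i,j}[\gamma_i,\delta_j]$, a polynomial in the coefficients of $f,g$. Discriminant-resultants: for $n\ge2$, write $f(x,y)=\sum_{i=0}^n a_ix^iy^{n-i}$ of degree $n$ and let $g$ have degree $n-2$; the polynomials $DR_{n,r}(f,g)$, $0\le r\le n$, are defined by $$\sum_{r=0}^n DR_{n,r}(f,g)\,t^r=\mathrm{res}\big(f,\,x\partial_xf+t\,xy\,g\big)/(a_0a_n),$$ with $t$ an indeterminate and the division exact. *)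

theory Defs
  imports "Subresultants.Resultant_Prelim"
begin

text \<open>A binary form of degree d, sum over i of c i * x^i * y^(d-i), is encoded by its
  degree d and its coefficient function c (only c 0, ..., c d matter).
  Its dehomogenisation (y := 1) is the univariate polynomial below.\<close>

definition form_dehom :: "nat \<Rightarrow> (nat \<Rightarrow> 'a::comm_ring_1) \<Rightarrow> 'a poly" where
  "form_dehom d c = (\<Sum>i\<le>d. monom (c i) i)"

text \<open>Resultant of binary forms of (formal) degrees d and e with the paper's
  convention res(f,g) = prod_{i,j} [gamma_i, delta_j]; this equals
  (-1)^(d*e) times the Sylvester determinant taken with the formal degrees.\<close>

definition res_form :: "nat \<Rightarrow> (nat \<Rightarrow> 'a::comm_ring_1) \<Rightarrow> nat \<Rightarrow> (nat \<Rightarrow> 'a) \<Rightarrow> 'a" where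
  "res_form d c e c' =
     (-1)^(d*e) * det (sylvester_mat_sub d e (form_dehom d c) (form_dehom e c'))"

text \<open>For f = sum a_i x^i y^(n-i) (degree n) and g = sum b_j x^j y^(n-2-j) (degree n-2),
  the coefficient of x^i y^(n-i) in x*d_x f + t*x*y*g, as a polynomial in t.\<close>

definition DR_aux_coeff :: "nat \<Rightarrow> (nat \<Rightarrow> 'a::comm_ring_1) \<Rightarrow> (nat \<Rightarrow> 'a) \<Rightarrow> nat \<Rightarrow> 'a poly" where
  "DR_aux_coeff n a b i =
     [: of_nat i * a i, (if 1 \<le> i \<and> i - 1 \<le> n - 2 then b (i - 1) else 0) :]"

text \<open>res(f, x d_x f + t x y g) as a polynomial in t.\<close>

definition DR_numer :: "nat \<Rightarrow> (nat \<Rightarrow> 'a::comm_ring_1) \<Rightarrow> (nat \<Rightarrow> 'a) \<Rightarrow> 'a poly" where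
  "DR_numer n a b = res_form n (\<lambda>i. [: a i :]) n (DR_aux_coeff n a b)"

text \<open>Discriminant-resultant DR_{n,r}(f,g), evaluated at concrete coefficients
  (meaningful where a_0 a_n is nonzero).\<close>

definition DR :: "nat \<Rightarrow> nat \<Rightarrow> (nat \<Rightarrow> 'a::field) \<Rightarrow> (nat \<Rightarrow> 'a) \<Rightarrow> 'a" where
  "DR n r a b = coeff (DR_numer n a b) r / (a 0 * a n)"

end

theory Submission
  imports Defs "Subresultants.Subresultant" "HOL-Algebra.Algebraic_Closure_Type"
begin

text \<open>Over an algebraic closure write \<open>f = a\<^sub>n \<Prod>i<n. (x - \<alpha>\<^sub>i)\<close> (dehomogenised at \<open>y = 1\<close>).
  Poisson's formula turns \<open>res(f, x f' + t x g)\<close> into \<open>\<plusminus>a\<^sub>n\<^sup>n \<Prod>i<n. \<alpha>\<^sub>i (f'(\<alpha>\<^sub>i) + t g(\<alpha>\<^sub>i))\<close>,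
  so its coefficient of \<open>t\<close> is \<open>\<plusminus>a\<^sub>n\<^sup>n (\<Prod>j. \<alpha>\<^sub>j) \<Sum>i. g(\<alpha>\<^sub>i) \<Prod>j\<noteq>i. f'(\<alpha>\<^sub>j)\<close>.
  If two roots coincide, every product \<open>\<Prod>j\<noteq>i. f'(\<alpha>\<^sub>j)\<close> contains a vanishing factor.
  Otherwise \<open>f'(\<alpha>\<^sub>j) = a\<^sub>n \<Prod>k\<noteq>j. (\<alpha>\<^sub>j - \<alpha>\<^sub>k)\<close>, and the sum is a multiple of
  \<open>\<Sum>i. g(\<alpha>\<^sub>i) / \<Prod>k\<noteq>i. (\<alpha>\<^sub>i - \<alpha>\<^sub>k)\<close>, the coefficient of \<open>x\<^sup>n\<^sup>-\<^sup>1\<close> in the Lagrange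
  interpolant of \<open>g\<close> at the roots; this interpolant is \<open>g\<close> itself, of degree \<open>\<le> n - 2\<close>.\<close>

hide_const (open) Polynomials.degree Polynomials.lead_coeff up_ring.coeff

lemma prod_list_map_nth: "prod_list (map h xs) = (\<Prod>i<length xs. h (xs ! i))"
  by (induction xs) (simp_all add: prod.lessThan_Suc_shift del: prod.lessThan_Suc)

lemma alg_closed_factorization_nth:
  fixes p :: "'k::alg_closed_field poly"
  assumes "p \<noteq> 0"
  obtains \<alpha> where "p = smult (lead_coeff p) (\<Prod>i<degree p. [:-\<alpha> i, 1:])"
proof -
  obtain A where A: "size A = degree p" "p = smult (lead_coeff p) (\<Prod>x\<in>#A. [:-x, 1:])"
    using alg_closed_imp_factorization[OF assms] by blast
  obtain xs where xs: "mset xs = A" using ex_mset by blast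
  have "(\<Prod>x\<in>#A. [:-x, 1:]) = (\<Prod>i<degree p. [:-(xs ! i), 1:])"
    using A(1) by (simp flip: xs mset_map add: prod_mset_prod_list prod_list_map_nth)
  with A(2) show thesis by (intro that) simp
qed

lemma prod_poly_roots_swap:
  fixes c d :: "'k::comm_ring_1"
  assumes f: "f = smult c (\<Prod>i<m. [:-\<alpha> i, 1:])" and q: "q = smult d (\<Prod>j<k. [:-\<beta> j, 1:])"
  shows "(-1)^(m * k) * d^m * (\<Prod>j<k. poly f (\<beta> j)) = c^k * (\<Prod>i<m. poly q (\<alpha> i))"
proof -
  have "(\<Prod>j<k. \<Prod>i<m. \<beta> j - \<alpha> i) = (\<Prod>j<k. \<Prod>i<m. -1 * (\<alpha> i - \<beta> j))"
    by simp
  also have "\<dots> = (-1)^(m * k) * (\<Prod>j<k. \<Prod>i<m. \<alpha> i - \<beta> j)"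
    by (simp only: prod.distrib prod_constant card_lessThan power_mult)
  finally have "(-1)^(m * k) * (\<Prod>j<k. \<Prod>i<m. \<beta> j - \<alpha> i) = (\<Prod>j<k. \<Prod>i<m. \<alpha> i - \<beta> j)"
    by (simp flip: power_add mult_2)
  then show ?thesis
    unfolding f q by (simp add: poly_prod prod.distrib prod.swap[of _ "{..<k}"] algebra_simps)
qed

lemma resultant_eq_mod:
  fixes f q :: "'k::field poly"
  assumes deg: "degree q \<le> degree f" and q: "0 < degree q"
  shows "resultant f q
    = (-1)^(degree f * degree q) * lead_coeff q ^ (degree f - degree (f mod q)) * resultant q (f mod q)"
proof -
  define H where "H = f mod q"
  have FGH: "f + (- (f div q)) * q = H"
    unfolding H_def by (simp flip: minus_div_mult_eq_mod)
  have "q \<noteq> 0" using q by auto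
  then have dH: "degree H < degree q"
    using q degree_mod_less[of q f] unfolding H_def by (cases "f mod q = 0") auto
  then have choice: "degree q > degree H \<or> H = 0 \<and> f \<noteq> 0 \<and> q \<noteq> 0" by simp
  show ?thesis
  proof (cases "degree H = 0")
    case True
    then obtain c where H: "H = [:c:]" by (metis degree_eq_zeroE)
    from BT_lemma_1_13[OF FGH deg choice] dH
    have "subresultant 0 f q
        = smult ((-1)^(degree f * degree q) * lead_coeff q ^ degree f * c ^ (degree q - 1)) H"
      by (simp add: H)
    then have "resultant f q = (-1)^(degree f * degree q) * lead_coeff q ^ degree f * c ^ degree q"
      using q by (simp add: subresultant_resultant H power_eq_if)
    then show ?thesis by (simp flip: H_def add: H)
  next
    case False
    from BT_lemma_1_12[OF FGH deg choice, of 0] False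
    have "subresultant 0 f q
        = smult ((-1)^(degree f * degree q) * lead_coeff q ^ (degree f - degree H)) (subresultant 0 q H)"
      by simp
    then show ?thesis by (simp add: subresultant_resultant H_def)
  qed
qed

lemma resultant_eq_prod_poly_roots:
  fixes f q :: "'k::alg_closed_field poly"
  assumes "degree q \<le> degree f" and "f = smult (lead_coeff f) (\<Prod>i<degree f. [:-\<alpha> i, 1:])"
  shows "resultant f q = lead_coeff f ^ degree q * (\<Prod>i<degree f. poly q (\<alpha> i))"
  using assms
proof (induction "degree q" arbitrary: f q \<alpha> rule: less_induct)
  case less
  show ?case
  proof (cases "degree q = 0")
    case True
    then obtain d where "q = [:d:]" by (metis degree_eq_zeroE)
    then show ?thesis by simp
  next
    case False
    then have "q \<noteq> 0" by auto
    then obtain \<beta> where q: "q = smult (lead_coeff q) (\<Prod>j<degree q. [:-\<beta> j, 1:])"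
      using alg_closed_factorization_nth by blast
    define H where "H = f mod q"
    have dH: "degree H < degree q"
      using False degree_mod_less[OF \<open>q \<noteq> 0\<close>] unfolding H_def by (cases "f mod q = 0") auto
    have H_eq_f_at_roots: "poly H (\<beta> j) = poly f (\<beta> j)" if "j < degree q" for j
    proof -
      have "poly q (\<beta> j) = 0"
        using that by (subst q) (auto simp: poly_prod)
      moreover have "poly (f div q * q + f mod q) (\<beta> j)
          = poly (f div q) (\<beta> j) * poly q (\<beta> j) + poly (f mod q) (\<beta> j)"
        by (simp only: poly_add poly_mult)
      ultimately show ?thesis unfolding H_def by simp
    qed
    have "resultant f q
        = (-1)^(degree f * degree q) * lead_coeff q ^ (degree f - degree H) * resultant q H"
      using resultant_eq_mod[OF less.prems(1)] False unfolding H_def by simp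
    also have "resultant q H = lead_coeff q ^ degree H * (\<Prod>j<degree q. poly f (\<beta> j))"
      using less.hyps[OF dH _ q] dH H_eq_f_at_roots by simp
    also have "(-1)^(degree f * degree q) * lead_coeff q ^ (degree f - degree H) * \<dots>
        = (-1)^(degree f * degree q) * lead_coeff q ^ degree f * (\<Prod>j<degree q. poly f (\<beta> j))"
      using dH less.prems(1) by (simp add: mult.assoc flip: power_add)
    also have "\<dots> = lead_coeff f ^ degree q * (\<Prod>i<degree f. poly q (\<alpha> i))"
      by (rule prod_poly_roots_swap[OF less.prems(2) q])
    finally show ?thesis .
  qed
qed

lemma coeff_prod_linear_factors:
  fixes u v :: "'i \<Rightarrow> 'k::comm_ring_1"
  assumes "finite I"
  shows "coeff (\<Prod>i\<in>I. [:u i, v i:]) 1 = (\<Sum>i\<in>I. v i * (\<Prod>j\<in>I - {i}. u j))"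
  using assms
proof (induction I rule: finite_induct)
  case (insert x I)
  have "coeff (\<Prod>i\<in>I. [:u i, v i:]) 0 = (\<Prod>i\<in>I. u i)"
    by (simp flip: poly_0_coeff_0 add: poly_prod)
  moreover have "insert x I - {i} = insert x (I - {i})" if "i \<in> I" for i
    using that insert.hyps(2) by auto
  moreover have "insert x I - {x} = I"
    using insert.hyps(2) by auto
  ultimately show ?case
    using insert by (simp add: coeff_mult numeral_2_eq_2 atMost_Suc sum_distrib_left mult_ac
      cong: sum.cong)
qed simp

lemma sum_mult_prod_remove:
  fixes x y z :: "'i \<Rightarrow> 'k::comm_ring_1"
  assumes "finite I"
  shows "(\<Sum>i\<in>I. x i * y i * (\<Prod>j\<in>I - {i}. x j * z j))
    = (\<Prod>j\<in>I. x j) * (\<Sum>i\<in>I. y i * (\<Prod>j\<in>I - {i}. z j))"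
  unfolding sum_distrib_left
proof (rule sum.cong)
  fix i assume "i \<in> I"
  then show "x i * y i * (\<Prod>j\<in>I - {i}. x j * z j) = (\<Prod>j\<in>I. x j) * (y i * (\<Prod>j\<in>I - {i}. z j))"
    using assms by (simp add: prod.distrib prod.remove mult_ac)
qed simp

lemma poly_pderiv_at_root:
  fixes \<alpha> :: "nat \<Rightarrow> 'k::idom"
  assumes f: "f = smult c (\<Prod>j<n. [:-\<alpha> j, 1:])" and i: "i < n"
  shows "poly (pderiv f) (\<alpha> i) = c * (\<Prod>j\<in>{..<n} - {i}. \<alpha> i - \<alpha> j)"
proof -
  define r where "r = smult c (\<Prod>j\<in>{..<n} - {i}. [:-\<alpha> j, 1:])"
  have fr: "f = [:-\<alpha> i, 1:] * r"
    unfolding f r_def using prod.remove[of "{..<n}" i "\<lambda>j. [:-\<alpha> j, 1:]"] i by simp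
  have "pderiv [:-\<alpha> i, 1:] = 1"
    by (simp add: pderiv_pCons)
  then have "pderiv f = [:-\<alpha> i, 1:] * pderiv r + r"
    unfolding fr pderiv_mult by simp
  then show ?thesis
    by (simp add: r_def poly_prod)
qed

lemma sum_interpolation_weights_eq_0:
  fixes \<alpha> :: "nat \<Rightarrow> 'k::field"
  assumes inj: "inj_on \<alpha> {..<n}" and g: "degree g < n - 1"
  shows "(\<Sum>i<n. poly g (\<alpha> i) / (\<Prod>j\<in>{..<n} - {i}. \<alpha> i - \<alpha> j)) = 0"
proof -
  define w where "w i = (\<Prod>j\<in>{..<n} - {i}. \<alpha> i - \<alpha> j)" for i
  define P where "P i = (\<Prod>j\<in>{..<n} - {i}. [:-\<alpha> j, 1:])" for i
  have P: "degree (P i) = n - 1 \<and> coeff (P i) (n - 1) = 1" if "i < n" for i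
  proof -
    have "sum (degree \<circ> (\<lambda>j. [:-\<alpha> j, 1:])) ({..<n} - {i}) = n - 1"
      using that by (simp add: card_Diff_singleton)
    moreover have "degree (P i) = sum (degree \<circ> (\<lambda>j. [:-\<alpha> j, 1:])) ({..<n} - {i}) \<and>
        coeff (P i) (sum (degree \<circ> (\<lambda>j. [:-\<alpha> j, 1:])) ({..<n} - {i})) = 1"
      unfolding P_def by (rule degree_prod_sum_monic) auto
    ultimately show ?thesis by simp
  qed
  have P_at: "poly (P i) (\<alpha> m) = (if i = m then w m else 0)" if "i < n" "m < n" for i m
    using that inj unfolding P_def w_def poly_prod by (auto intro!: prod_zero simp: inj_on_def)
  \<comment> \<open>the Lagrange interpolant of \<open>g\<close> at the nodes \<open>\<alpha> i\<close>\<close>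
  define L where "L = (\<Sum>i<n. smult (poly g (\<alpha> i) / w i) (P i))"
  have "w m \<noteq> 0" if "m < n" for m
    unfolding w_def using inj that by (auto simp: inj_on_def)
  then have "poly L (\<alpha> m) = poly g (\<alpha> m)" if "m < n" for m
    using that by (simp add: L_def poly_sum P_at if_distrib[of "(*) _"] cong: if_cong)
  moreover have "degree L < n"
    using g by (auto simp: L_def P intro!: le_less_trans[OF degree_sum_le] le_less_trans[OF degree_smult_le])
  ultimately have "L = g"
    using g inj by (intro poly_eqI_degree[of "\<alpha> ` {..<n}"]) (auto simp: card_image)
  moreover have "coeff L (n - 1) = (\<Sum>i<n. poly g (\<alpha> i) / w i)"
    unfolding L_def coeff_sum coeff_smult using P by simp
  ultimately show ?thesis
    using g by (simp add: w_def coeff_eq_0)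
qed

lemma sum_poly_prod_pderiv_roots_eq_0:
  fixes \<alpha> :: "nat \<Rightarrow> 'k::field"
  assumes f: "f = smult c (\<Prod>j<n. [:-\<alpha> j, 1:])" and g: "degree g < n - 1"
  shows "(\<Sum>i<n. poly g (\<alpha> i) * (\<Prod>j\<in>{..<n} - {i}. poly (pderiv f) (\<alpha> j))) = 0"
proof -
  define w where "w i = (\<Prod>j\<in>{..<n} - {i}. \<alpha> i - \<alpha> j)" for i
  have f': "(\<Prod>j\<in>{..<n} - {i}. poly (pderiv f) (\<alpha> j)) = c ^ (n - 1) * (\<Prod>j\<in>{..<n} - {i}. w j)"
    if "i < n" for i
    using that by (simp add: poly_pderiv_at_root[OF f] w_def prod.distrib card_Diff_singleton)
  show ?thesis
  proof (cases "inj_on \<alpha> {..<n}")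
    case True
    have "w i \<noteq> 0" if "i < n" for i
      unfolding w_def using True that by (auto simp: inj_on_def)
    then have "(\<Prod>j\<in>{..<n} - {i}. w j) = (\<Prod>j<n. w j) / w i" if "i < n" for i
      using that by (simp add: prod.remove nonzero_eq_divide_eq)
    then have "(\<Sum>i<n. poly g (\<alpha> i) * (\<Prod>j\<in>{..<n} - {i}. poly (pderiv f) (\<alpha> j)))
        = c ^ (n - 1) * (\<Prod>j<n. w j) * (\<Sum>i<n. poly g (\<alpha> i) / w i)"
      by (simp add: f' sum_distrib_left mult_ac)
    also have "(\<Sum>i<n. poly g (\<alpha> i) / w i) = 0"
      using sum_interpolation_weights_eq_0[OF True g] unfolding w_def .
    finally show ?thesis by simp
  next
    case False
    then obtain p q where pq: "p < n" "q < n" "p \<noteq> q" "\<alpha> p = \<alpha> q"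
      unfolding inj_on_def by auto
    have "w p = 0"
      unfolding w_def using pq by (intro prod_zero bexI[of _ q]) auto
    moreover have "w q = 0"
      unfolding w_def using pq by (intro prod_zero bexI[of _ p]) auto
    ultimately have "(\<Prod>j\<in>{..<n} - {i}. w j) = 0" for i
      using pq by (intro prod_zero bexI[of _ "if i = p then q else p"]) auto
    then show ?thesis
      by (intro sum.neutral) (simp add: f')
  qed
qed

lemma coeff_form_dehom: "coeff (form_dehom d c) i = (if i \<le> d then c i else 0)"
  unfolding form_dehom_def coeff_sum coeff_monom by (auto simp: sum.delta)

lemma degree_form_dehom_le: "degree (form_dehom d c) \<le> d"
  by (rule degree_le) (simp add: coeff_form_dehom)

lemma degree_form_dehom: "c d \<noteq> 0 \<Longrightarrow> degree (form_dehom d c) = d"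
  by (intro antisym degree_form_dehom_le le_degree) (simp add: coeff_form_dehom)

lemma res_form_eq_resultant:
  assumes "c d \<noteq> 0" and "c' e \<noteq> 0"
  shows "res_form d c e c' = (-1)^(d * e) * resultant (form_dehom d c) (form_dehom e c')"
  using assms by (simp add: res_form_def resultant_def sylvester_mat_def degree_form_dehom)

lemma (in comm_ring_hom) map_poly_form_dehom: "map_poly hom (form_dehom d c) = form_dehom d (hom \<circ> c)"
  by (rule poly_eqI) (simp add: coeff_map_poly coeff_form_dehom)

lemma (in comm_ring_hom) res_form_hom: "hom (res_form d c e c') = res_form d (hom \<circ> c) e (hom \<circ> c')"
  unfolding res_form_def hom_mult hom_power hom_uminus hom_one hom_det[symmetric]
    sylvester_mat_sub_map[of hom, OF hom_zero] map_poly_form_dehom ..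

lemma comm_ring_hom_poly_map_poly:
  assumes "comm_ring_hom h"
  shows "comm_ring_hom (\<lambda>p. poly (map_poly h p) t)"
proof -
  interpret h: comm_ring_hom h by fact
  interpret map_h: map_poly_comm_ring_hom h ..
  show ?thesis by unfold_locales (simp_all add: map_h.hom_add map_h.hom_mult)
qed

lemma comm_ring_hom_to_ac: "comm_ring_hom to_ac"
  by unfold_locales simp_all

lemma form_dehom_x_pderiv_add:
  assumes "n \<ge> 1"
  shows "form_dehom n (\<lambda>i. of_nat i * A i + t * (if 1 \<le> i \<and> i - 1 \<le> n - 2 then B (i - 1) else 0))
    = pCons 0 (pderiv (form_dehom n A) + smult t (form_dehom (n - 2) B))"
  using assms by (intro poly_eqI) (auto simp: coeff_form_dehom coeff_pCons coeff_pderiv split: nat.split)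

lemma DR_numer_root_product:
  fixes n :: nat and a b :: "nat \<Rightarrow> 'a::field_char_0"
  defines "f \<equiv> form_dehom n (to_ac \<circ> a)" and "g \<equiv> form_dehom (n - 2) (to_ac \<circ> b)"
  assumes n: "n \<ge> 2" and an: "a n \<noteq> 0" and f_roots: "f = smult (to_ac (a n)) (\<Prod>i<n. [:-\<alpha> i, 1:])"
  shows "map_poly to_ac (DR_numer n a b) = smult ((-1)^(n * n) * to_ac (a n) ^ n)
    (\<Prod>i<n. [:\<alpha> i * poly (pderiv f) (\<alpha> i), \<alpha> i * poly g (\<alpha> i):])"
proof (intro iffD1[OF poly_eq_poly_eq_iff] ext)
  fix t :: "'a alg_closure"
  define \<psi> where "\<psi> p = poly (map_poly to_ac p) t" for p
  interpret \<psi>: comm_ring_hom \<psi>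
    unfolding \<psi>_def by (rule comm_ring_hom_poly_map_poly[OF comm_ring_hom_to_ac])
  define c where "c = (\<lambda>i. of_nat i * to_ac (a i) + t * (if 1 \<le> i \<and> i - 1 \<le> n - 2 then to_ac (b (i - 1)) else 0))"
  have "\<psi> \<circ> (\<lambda>i. [:a i:]) = to_ac \<circ> a" and "\<psi> \<circ> DR_aux_coeff n a b = c"
    by (simp_all add: fun_eq_iff \<psi>_def c_def DR_aux_coeff_def Polynomial.map_poly_pCons)
  have deg_f: "degree f = n" and lead_f: "coeff f n = to_ac (a n)"
    using an by (simp_all add: f_def degree_form_dehom coeff_form_dehom)
  have "c n = of_nat n * to_ac (a n)"
    using n by (simp add: c_def)
  then have "c n \<noteq> 0"
    using n an by simp
  have "\<psi> (DR_numer n a b) = res_form n (to_ac \<circ> a) n c"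
    unfolding DR_numer_def \<psi>.res_form_hom \<open>\<psi> \<circ> (\<lambda>i. [:a i:]) = to_ac \<circ> a\<close> \<open>\<psi> \<circ> DR_aux_coeff n a b = c\<close> ..
  also have "\<dots> = (-1)^(n * n) * resultant f (form_dehom n c)"
    using an \<open>c n \<noteq> 0\<close> by (simp add: res_form_eq_resultant f_def)
  also have "resultant f (form_dehom n c) = to_ac (a n) ^ n * (\<Prod>i<n. poly (form_dehom n c) (\<alpha> i))"
  proof -
    have "f = smult (lead_coeff f) (\<Prod>i<degree f. [:-\<alpha> i, 1:])"
      using f_roots unfolding lead_f deg_f .
    from resultant_eq_prod_poly_roots[OF _ this] show ?thesis
      using degree_form_dehom[of c n] \<open>c n \<noteq> 0\<close> unfolding lead_f deg_f by simp
  qed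
  also have "form_dehom n c = pCons 0 (pderiv f + smult t g)"
    unfolding c_def f_def g_def o_def using n by (intro form_dehom_x_pderiv_add) simp
  finally show "poly (map_poly to_ac (DR_numer n a b)) t = poly (smult ((-1)^(n * n) * to_ac (a n) ^ n)
    (\<Prod>i<n. [:\<alpha> i * poly (pderiv f) (\<alpha> i), \<alpha> i * poly g (\<alpha> i):])) t"
    by (simp add: \<psi>_def poly_prod algebra_simps)
qed

theorem corollary4p1:
  fixes n :: nat and a b :: "nat \<Rightarrow> 'a::field_char_0"
  assumes "n \<ge> 2" and "a 0 \<noteq> 0" and "a n \<noteq> 0"
  shows "DR n 1 a b = 0"
  \<comment> \<open>\<open>a 0 \<noteq> 0\<close> only makes the division in \<open>DR\<close> exact; the numerator coefficient vanishes regardless.\<close>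
proof -
  define f where "f = form_dehom n (to_ac \<circ> a)"
  define g where "g = form_dehom (n - 2) (to_ac \<circ> b)"
  have "degree f = n" and "lead_coeff f = to_ac (a n)"
    using assms(3) by (simp_all add: f_def degree_form_dehom coeff_form_dehom)
  moreover from this have "f \<noteq> 0"
    using assms(3) by auto
  ultimately obtain \<alpha> where roots: "f = smult (to_ac (a n)) (\<Prod>i<n. [:-\<alpha> i, 1:])"
    using alg_closed_factorization_nth by metis
  have "degree g < n - 1"
    using assms(1) degree_form_dehom_le[of "n - 2" "to_ac \<circ> b"] unfolding g_def by linarith
  have "to_ac (coeff (DR_numer n a b) 1) = coeff (map_poly to_ac (DR_numer n a b)) 1"
    by (simp add: coeff_map_poly)
  also have "\<dots> = (-1)^(n * n) * to_ac (a n) ^ n *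
      (\<Sum>i<n. \<alpha> i * poly g (\<alpha> i) * (\<Prod>j\<in>{..<n} - {i}. \<alpha> j * poly (pderiv f) (\<alpha> j)))"
    unfolding DR_numer_root_product[where b = b, OF assms(1,3) roots[unfolded f_def], folded f_def g_def]
      coeff_smult coeff_prod_linear_factors[OF finite_lessThan] ..
  also have "\<dots> = (-1)^(n * n) * to_ac (a n) ^ n * (\<Prod>j<n. \<alpha> j) *
      (\<Sum>i<n. poly g (\<alpha> i) * (\<Prod>j\<in>{..<n} - {i}. poly (pderiv f) (\<alpha> j)))"
    unfolding sum_mult_prod_remove[OF finite_lessThan] by (simp only: mult.assoc)
  also have "(\<Sum>i<n. poly g (\<alpha> i) * (\<Prod>j\<in>{..<n} - {i}. poly (pderiv f) (\<alpha> j))) = 0"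
    by (rule sum_poly_prod_pderiv_roots_eq_0[OF roots \<open>degree g < n - 1\<close>])
  finally show ?thesis
    by (simp add: DR_def)
qed

end
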